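(* Let $f\colon M^n\to\mathbb{S}^{n+m}$ be an isometric immersion, $x\in M^n$, and $k$ an integer with $2\leq k\leq n/2$, and assume that $\mathrm{Ric}_M(X)\geq b(n,k,H(x))$ for every unit $X\in T_xM$, where $b(n,k,H)=\frac{n(k-1)}{k}+\frac{n(k-1)H}{2k^2}\big(nH+\sqrt{n^2H^2+4k(n-k)}\big)$. Let $$\lambda(n,k,H)=\frac{1}{2k}\big(nH+\sqrt{n^2H^2+4k(n-k)}\big),\qquad \mu(n,k,H)=\frac{1}{2k}\big(n(2k-1)H-\sqrt{n^2H^2+4k(n-k)}\big).$$ Then: (i) If $H(x)\neq 0$, the shape operator $A_1$ of $f$ at $x$ in the direction $\xi_1=\mathcal H(x)/H(x)$ satisfies $\mu(n,k,H(x))\leq\langle A_1X,X\rangle\leq\lambda(n,k,H(x))$ for every unit $X\in T_xM$. (ii) If $H(x)=0$, then for every unit normal vector $\xi\in N_fM(x)$ the shape operator $A_\xi$ satisfies $\mu(n,k,0)\leq\langle A_\xi X,X\rangle\leq\lambda(n,k,0)$ for every unit $X\in T_xM$.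
   Context: $\mathbb{S}^{n+m}$ is the unit sphere; $\mathcal H=\frac1n\mathrm{tr}\,\alpha_f$ is the normalized mean curvature vector of $f$ ($\alpha_f$ its second fundamental form), $H=\|\mathcal H\|$, $A_\xi$ the shape operator in the normal direction $\xi$, and $\mathrm{Ric}_M(X)$ the non-normalized Ricci curvature in the unit direction $X$. *)

theory Defs
  imports "HOL-Analysis.Analysis"
begin

text \<open>Pointwise model of an isometric immersion f: M^n -> S^(n+m) at a point x.
  The tangent space T_xM is identified isometrically with real^'n (n = CARD('n)),
  the normal space N_fM(x) with real^'m; the standard basis vectors axis i 1 form
  an orthonormal basis of T_xM.  The second fundamental form at x is a symmetric
  bilinear map alpha :: real^'n => real^'n => real^'m.\<close>

definition mean_curv_vec :: "(real^'n \<Rightarrow> real^'n \<Rightarrow> real^'m) \<Rightarrow> real^'m" where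
  "mean_curv_vec \<alpha> = (1 / real CARD('n)) *\<^sub>R (\<Sum>i\<in>UNIV. \<alpha> (axis i 1) (axis i 1))"

text \<open>Shape operator A_xi, determined by <A_xi X, Y> = <alpha(X,Y), xi>.\<close>
definition shape_op :: "(real^'n \<Rightarrow> real^'n \<Rightarrow> real^'m) \<Rightarrow> real^'m \<Rightarrow> real^'n \<Rightarrow> real^'n" where
  "shape_op \<alpha> \<xi> X = (\<chi> i. \<alpha> X (axis i 1) \<bullet> \<xi>)"

text \<open>Sectional curvature of M at x, by the Gauss equation for submanifolds of the unit sphere:
  K(X,Y) = 1 + <alpha(X,X),alpha(Y,Y)> - |alpha(X,Y)|^2 for orthonormal X, Y.
  The (non-normalized) Ricci curvature in the unit direction X is
  Ric(X) = sum_i <R(X,e_i)e_i, X>, which by the Gauss equation equals the following.\<close>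
definition ricci :: "(real^'n \<Rightarrow> real^'n \<Rightarrow> real^'m) \<Rightarrow> real^'n \<Rightarrow> real" where
  "ricci \<alpha> X = (\<Sum>i\<in>UNIV. (X \<bullet> X) * (axis i (1::real) \<bullet> axis i (1::real)) - (X \<bullet> axis i 1)^2
        + \<alpha> X X \<bullet> \<alpha> (axis i 1) (axis i 1) - \<alpha> X (axis i 1) \<bullet> \<alpha> X (axis i 1))"

definition bnd :: "real \<Rightarrow> real \<Rightarrow> real \<Rightarrow> real" where
  "bnd n k H = n * (k - 1) / k + n * (k - 1) * H / (2 * k^2) * (n * H + sqrt (n^2 * H^2 + 4 * k * (n - k)))"

definition lam :: "real \<Rightarrow> real \<Rightarrow> real \<Rightarrow> real" where
  "lam n k H = (1 / (2 * k)) * (n * H + sqrt (n^2 * H^2 + 4 * k * (n - k)))"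

definition mu :: "real \<Rightarrow> real \<Rightarrow> real \<Rightarrow> real" where
  "mu n k H = (1 / (2 * k)) * (n * (2 * k - 1) * H - sqrt (n^2 * H^2 + 4 * k * (n - k)))"

end

theory Submission
  imports Defs
begin

text \<open>Both cases are handled at once by a unit normal \<open>\<xi>\<close> with \<open>\<H> = H \<xi>\<close>
  (\<open>\<xi> = \<H>/H\<close> if \<open>H \<noteq> 0\<close>, any unit \<open>\<xi>\<close> if \<open>H = 0\<close>). For a unit \<open>X\<close> put
  \<open>a = \<langle>A\<^sub>\<xi> X, X\<rangle>\<close>. By the Gauss equation
  \<open>Ric(X) = n - 1 + n \<langle>\<alpha>(X,X), \<H>\<rangle> - \<Sum>\<^sub>i |\<alpha>(X,e\<^sub>i)|\<^sup>2\<close>, and Cauchy-Schwarz gives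
  \<open>a\<^sup>2 \<le> |A\<^sub>\<xi> X|\<^sup>2 \<le> \<Sum>\<^sub>i |\<alpha>(X,e\<^sub>i)|\<^sup>2\<close>, so the Ricci bound yields
  \<open>a\<^sup>2 - nHa + b - n + 1 \<le> 0\<close>. The roots of this quadratic are \<open>\<lambda>\<close> and \<open>\<mu>\<close>,
  hence \<open>a\<close> lies between them. Finally \<open>\<mu> \<le> \<lambda>\<close>: otherwise every diagonal
  entry \<open>\<langle>A\<^sub>\<xi> e\<^sub>i, e\<^sub>i\<rangle>\<close> would be at least \<open>\<lambda> > H\<close> (as \<open>n \<ge> 2k\<close>),
  contradicting \<open>tr A\<^sub>\<xi> = nH\<close>.\<close>

lemma inner_shape_op_self:
  fixes \<alpha> :: "real^'n \<Rightarrow> real^'n \<Rightarrow> real^'m"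
  assumes "bilinear \<alpha>"
  shows "shape_op \<alpha> \<xi> X \<bullet> X = \<alpha> X X \<bullet> \<xi>"
proof -
  have lin: "linear (\<alpha> X)" using assms unfolding bilinear_def by auto
  have "\<alpha> X X = \<alpha> X (\<Sum>i\<in>UNIV. (X$i) *\<^sub>R axis i 1)"
    using basis_expansion[of X] by (simp add: scalar_mult_eq_scaleR)
  also have "\<dots> = (\<Sum>i\<in>UNIV. (X$i) *\<^sub>R \<alpha> X (axis i 1))"
    by (simp add: linear_sum[OF lin] linear_scale[OF lin])
  finally have "\<alpha> X X \<bullet> \<xi> = (\<Sum>i\<in>UNIV. X$i * (\<alpha> X (axis i 1) \<bullet> \<xi>))"
    by (simp add: inner_sum_left)
  then show ?thesis by (simp add: shape_op_def inner_vec_def mult.commute)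
qed

lemma inner_second_fundamental_form_sq_le:
  fixes \<alpha> :: "real^'n \<Rightarrow> real^'n \<Rightarrow> real^'m"
  assumes "bilinear \<alpha>" and X: "norm X = 1" and \<xi>: "norm \<xi> = 1"
  shows "(\<alpha> X X \<bullet> \<xi>)\<^sup>2 \<le> (\<Sum>i\<in>UNIV. \<alpha> X (axis i 1) \<bullet> \<alpha> X (axis i 1))"
proof -
  have "(\<alpha> X X \<bullet> \<xi>)\<^sup>2 = (shape_op \<alpha> \<xi> X \<bullet> X)\<^sup>2"
    by (simp add: inner_shape_op_self[OF assms(1)])
  also have "\<dots> \<le> (norm (shape_op \<alpha> \<xi> X) * norm X)\<^sup>2"
    by (metis Cauchy_Schwarz_ineq2 abs_ge_zero power2_abs power_mono)
  also have "\<dots> = shape_op \<alpha> \<xi> X \<bullet> shape_op \<alpha> \<xi> X"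
    using X by (simp add: power2_norm_eq_inner)
  also have "\<dots> = (\<Sum>i\<in>UNIV. (\<alpha> X (axis i 1) \<bullet> \<xi>)\<^sup>2)"
    by (simp add: shape_op_def inner_vec_def power2_eq_square)
  also have "\<dots> \<le> (\<Sum>i\<in>UNIV. \<alpha> X (axis i 1) \<bullet> \<alpha> X (axis i 1))"
  proof (rule sum_mono)
    fix i
    have "(\<alpha> X (axis i 1) \<bullet> \<xi>)\<^sup>2 \<le> (norm (\<alpha> X (axis i 1)) * norm \<xi>)\<^sup>2"
      by (metis Cauchy_Schwarz_ineq2 abs_ge_zero power2_abs power_mono)
    then show "(\<alpha> X (axis i 1) \<bullet> \<xi>)\<^sup>2 \<le> \<alpha> X (axis i 1) \<bullet> \<alpha> X (axis i 1)"
      using \<xi> by (simp add: power2_norm_eq_inner)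
  qed
  finally show ?thesis .
qed

lemma sum_second_fundamental_form_basis:
  fixes \<alpha> :: "real^'n \<Rightarrow> real^'n \<Rightarrow> real^'m"
  shows "(\<Sum>i\<in>UNIV. \<alpha> (axis i 1) (axis i 1)) = real CARD('n) *\<^sub>R mean_curv_vec \<alpha>"
  by (simp add: mean_curv_vec_def)

lemma ricci_unit_eq:
  fixes \<alpha> :: "real^'n \<Rightarrow> real^'n \<Rightarrow> real^'m"
  assumes "norm X = 1"
  shows "ricci \<alpha> X = real CARD('n) - 1 + real CARD('n) * (\<alpha> X X \<bullet> mean_curv_vec \<alpha>)
     - (\<Sum>i\<in>UNIV. \<alpha> X (axis i 1) \<bullet> \<alpha> X (axis i 1))"
proof -
  have XX: "X \<bullet> X = 1" using assms by (simp add: power2_norm_eq_inner[symmetric])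
  have "(\<Sum>i\<in>UNIV. (X \<bullet> axis i 1)\<^sup>2) = 1"
    using XX unfolding inner_axis by (simp add: inner_vec_def power2_eq_square)
  moreover have "(\<Sum>i\<in>UNIV. \<alpha> X X \<bullet> \<alpha> (axis i 1) (axis i 1))
      = real CARD('n) * (\<alpha> X X \<bullet> mean_curv_vec \<alpha>)"
    by (simp add: mean_curv_vec_def inner_sum_right)
  ultimately show ?thesis
    unfolding ricci_def using XX by (simp add: sum.distrib sum_subtractf inner_axis_axis)
qed

lemma lam_add_mu:
  assumes "0 < k"
  shows "lam n k H + mu n k H = n * H"
  using assms by (simp add: lam_def mu_def field_simps)

lemma lam_mult_mu:
  assumes "0 < k" "k \<le> n"
  shows "lam n k H * mu n k H = bnd n k H - n + 1"
proof -
  define S where "S = sqrt (n\<^sup>2 * H\<^sup>2 + 4 * k * (n - k))"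
  have S2: "S\<^sup>2 = n\<^sup>2 * H\<^sup>2 + 4 * k * (n - k)"
    unfolding S_def using assms by simp
  have "4 * k\<^sup>2 * (lam n k H * mu n k H) = (n * H + S) * (n * (2 * k - 1) * H - S)"
    using assms by (simp add: lam_def mu_def S_def field_simps power2_eq_square)
  also have "\<dots> = n\<^sup>2 * (2 * k - 1) * H\<^sup>2 + 2 * n * (k - 1) * H * S - S\<^sup>2"
    by (simp add: algebra_simps power2_eq_square)
  also have "\<dots> = 4 * k\<^sup>2 * (bnd n k H - n + 1)"
    unfolding bnd_def S_def[symmetric] S2 using assms by (simp add: field_simps power2_eq_square)
  finally show ?thesis using assms by simp
qed

lemma lam_gt:
  assumes "0 < k" "2 * k \<le> n" "0 \<le> H"
  shows "H < lam n k H"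
proof -
  define S where "S = sqrt (n\<^sup>2 * H\<^sup>2 + 4 * k * (n - k))"
  have "0 < S"
    unfolding S_def using assms by (intro real_sqrt_gt_zero add_nonneg_pos) auto
  moreover have "2 * k * H \<le> n * H" using assms by (simp add: mult_right_mono)
  ultimately show ?thesis
    unfolding lam_def S_def[symmetric] using assms by (simp add: field_simps)
qed

lemma between_roots:
  fixes a l m :: real
  assumes "(a - l) * (a - m) \<le> 0"
  shows "min l m \<le> a \<and> a \<le> max l m"
  using assms by (auto simp: mult_le_0_iff min_def max_def)

lemma ricci_bound_quadratic:
  fixes \<alpha> :: "real^'n \<Rightarrow> real^'n \<Rightarrow> real^'m"
  defines "n \<equiv> real CARD('n)"
  assumes "bilinear \<alpha>" and k: "0 < k" "k \<le> n"
    and ric: "bnd n k H \<le> ricci \<alpha> X"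
    and X: "norm X = 1" and \<xi>: "norm \<xi> = 1" and \<H>: "mean_curv_vec \<alpha> = H *\<^sub>R \<xi>"
  shows "(\<alpha> X X \<bullet> \<xi> - lam n k H) * (\<alpha> X X \<bullet> \<xi> - mu n k H) \<le> 0"
proof -
  let ?a = "\<alpha> X X \<bullet> \<xi>"
  have "bnd n k H \<le> n - 1 + n * H * ?a - ?a\<^sup>2"
    using ric ricci_unit_eq[OF X, of \<alpha>] inner_second_fundamental_form_sq_le[OF assms(2) X \<xi>]
    unfolding \<H> n_def by simp
  moreover have "(?a - lam n k H) * (?a - mu n k H)
      = ?a\<^sup>2 - (lam n k H + mu n k H) * ?a + lam n k H * mu n k H"
    by (simp add: algebra_simps power2_eq_square)
  ultimately show ?thesis
    unfolding lam_add_mu[OF k(1)] lam_mult_mu[OF k] by (simp add: algebra_simps)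
qed

lemma ricci_bound_mu_le_lam:
  fixes \<alpha> :: "real^'n \<Rightarrow> real^'n \<Rightarrow> real^'m"
  defines "n \<equiv> real CARD('n)"
  assumes "bilinear \<alpha>" and k: "0 < k" "2 * k \<le> n"
    and ric: "\<And>X. norm X = 1 \<Longrightarrow> bnd n k H \<le> ricci \<alpha> X"
    and \<xi>: "norm \<xi> = 1" and H: "0 \<le> H" and \<H>: "mean_curv_vec \<alpha> = H *\<^sub>R \<xi>"
  shows "mu n k H \<le> lam n k H"
proof (rule ccontr)
  assume "\<not> mu n k H \<le> lam n k H"
  have "k \<le> n" using k by simp
  have diag: "H < \<alpha> (axis i 1) (axis i 1) \<bullet> \<xi>" for i
  proof -
    have "(\<alpha> (axis i 1) (axis i 1) \<bullet> \<xi> - lam n k H)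
        * (\<alpha> (axis i 1) (axis i 1) \<bullet> \<xi> - mu n k H) \<le> 0"
      using ricci_bound_quadratic[OF assms(2) k(1) \<open>k \<le> n\<close>[unfolded n_def] _ norm_axis_1 \<xi> \<H>]
        ric[OF norm_axis_1] unfolding n_def by simp
    then have "lam n k H \<le> \<alpha> (axis i 1) (axis i 1) \<bullet> \<xi>"
      using between_roots \<open>\<not> mu n k H \<le> lam n k H\<close> by (metis min.absorb3 not_le)
    then show ?thesis using lam_gt[OF k H] by simp
  qed
  have "n * H = (\<Sum>i\<in>UNIV. \<alpha> (axis i 1) (axis i 1)) \<bullet> \<xi>"
    using \<xi> unfolding sum_second_fundamental_form_basis \<H> n_def by (simp add: norm_eq_1)
  also have "\<dots> = (\<Sum>i\<in>UNIV. \<alpha> (axis i 1) (axis i 1) \<bullet> \<xi>)"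
    by (simp add: inner_sum_left)
  also have "\<dots> > (\<Sum>i\<in>(UNIV::'n set). H)"
    by (rule sum_strict_mono) (auto simp: diag)
  finally show False by (simp add: n_def)
qed

lemma ricci_bound_shape_op_bounds:
  fixes \<alpha> :: "real^'n \<Rightarrow> real^'n \<Rightarrow> real^'m"
  defines "n \<equiv> real CARD('n)"
  assumes "bilinear \<alpha>" and k: "0 < k" "2 * k \<le> n"
    and ric: "\<And>X. norm X = 1 \<Longrightarrow> bnd n k H \<le> ricci \<alpha> X"
    and \<xi>: "norm \<xi> = 1" and H: "0 \<le> H" and \<H>: "mean_curv_vec \<alpha> = H *\<^sub>R \<xi>"
    and X: "norm X = 1"
  shows "mu n k H \<le> shape_op \<alpha> \<xi> X \<bullet> X \<and> shape_op \<alpha> \<xi> X \<bullet> X \<le> lam n k H"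
proof -
  have "k \<le> n" using k by simp
  have "mu n k H \<le> lam n k H"
    using ricci_bound_mu_le_lam[OF assms(2) k[unfolded n_def] _ \<xi> H \<H>] ric unfolding n_def .
  moreover have "(\<alpha> X X \<bullet> \<xi> - lam n k H) * (\<alpha> X X \<bullet> \<xi> - mu n k H) \<le> 0"
    using ricci_bound_quadratic[OF assms(2) k(1) _ _ X \<xi> \<H>] ric[OF X] \<open>k \<le> n\<close>
    unfolding n_def by simp
  ultimately show ?thesis
    using between_roots unfolding inner_shape_op_self[OF assms(2)] by (metis max.absorb1 min.absorb2)
qed

theorem lemma6:
  fixes \<alpha> :: "real^'n \<Rightarrow> real^'n \<Rightarrow> real^'m" and k :: nat
  assumes bil: "bilinear \<alpha>"
    and sym: "\<And>X Y. \<alpha> X Y = \<alpha> Y X"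
    and k2: "2 \<le> k" and kn: "2 * k \<le> CARD('n)"
    and ric: "\<And>X. norm X = 1 \<Longrightarrow>
               ricci \<alpha> X \<ge> bnd (real CARD('n)) (real k) (norm (mean_curv_vec \<alpha>))"
  shows "(norm (mean_curv_vec \<alpha>) \<noteq> 0 \<longrightarrow>
            (\<forall>X. norm X = 1 \<longrightarrow>
               (let H = norm (mean_curv_vec \<alpha>);
                    \<xi>1 = (1 / H) *\<^sub>R mean_curv_vec \<alpha>
                in mu (real CARD('n)) (real k) H \<le> shape_op \<alpha> \<xi>1 X \<bullet> X
                 \<and> shape_op \<alpha> \<xi>1 X \<bullet> X \<le> lam (real CARD('n)) (real k) H)))
       \<and> (norm (mean_curv_vec \<alpha>) = 0 \<longrightarrow>
            (\<forall>\<xi> X. norm \<xi> = 1 \<longrightarrow> norm X = 1 \<longrightarrow>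
               mu (real CARD('n)) (real k) 0 \<le> shape_op \<alpha> \<xi> X \<bullet> X
             \<and> shape_op \<alpha> \<xi> X \<bullet> X \<le> lam (real CARD('n)) (real k) 0))"
proof -
  have k: "0 < real k" "2 * real k \<le> real CARD('n)"
    using k2 kn by linarith+
  note bounds = ricci_bound_shape_op_bounds[OF bil k ric]
  let ?H = "norm (mean_curv_vec \<alpha>)"
  have "mu (real CARD('n)) (real k) ?H \<le> shape_op \<alpha> \<xi>1 X \<bullet> X
      \<and> shape_op \<alpha> \<xi>1 X \<bullet> X \<le> lam (real CARD('n)) (real k) ?H"
    if "?H \<noteq> 0" "norm X = 1" "\<xi>1 = (1 / ?H) *\<^sub>R mean_curv_vec \<alpha>" for X \<xi>1
    using bounds[of \<xi>1 X] that by simp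
  moreover have "mean_curv_vec \<alpha> = ?H *\<^sub>R \<xi>" if "?H = 0" for \<xi> :: "real^'m"
    using that by simp
  ultimately show ?thesis
    using bounds by (auto simp: Let_def)
qed

end
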